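(* Let $\mathbf t_1,\mathbf t_2$ be hyper-terms with disjoint supports, $I=\mathrm{supp}(\mathbf t_1)$, and $Q$ a post hyper-assertion. Then $$\Pi_I.\Big(\big(\mathrm{proj}(\mathbf t_2)\Rightarrow\mathrm{proj}(\mathbf t_1)\big)\wedge\mathrm{wp}\,(\mathbf t_1\uplus\mathbf t_2)\,\{Q\}\Big)\ \vdash\ \mathrm{wp}\,\mathbf t_2\,\{\Pi_I.Q\}.$$
   Context: Setting. $\mathrm{Val}=\mathbb{Z}$; $\mathrm{PVar}$ is a countably infinite set of program variables; a store is a function $s:\mathrm{PVar}\to\mathrm{Val}$; indices are $\mathrm{Idx}=\mathbb{N}$. Terms of a first-order imperative language are generated by $t ::= v \mid x \mid * \mid t\oplus t \mid \mathtt{skip}\mid x:=t \mid t;t \mid \mathtt{if}\ t\ \mathtt{then}\ t\ \mathtt{else}\ t \mid \mathtt{while}\ t\ \mathtt{do}\ t$, with a nondeterministic big-step semantics $t,s\Downarrow v,s'$. A hyper-term $\mathbf t$ is a finitely supported partial function from $\mathrm{Idx}$ to terms; a hyper-store is a total function $\mathbf s:\mathrm{Idx}\to\mathrm{Store}$; a hyper-return-value is a finitely supported partial function $\mathbf v:\mathrm{Idx}\rightharpoonup\mathrm{Val}$. $\uplus$ denotes union of maps with disjoint supports. $\mathbf t,\mathbf s\Downarrow\mathbf v,\mathbf s'$ holds iff for every $i\in\mathrm{supp}(\mathbf t)$, $\mathbf t(i),\mathbf s(i)\Downarrow\mathbf v(i),\mathbf s'(i)$, and for every $i\notin\mathrm{supp}(\mathbf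 t)$, $\mathbf s'(i)=\mathbf s(i)$ and $\mathbf v(i)$ is undefined. A hyper-assertion is a predicate on hyper-stores; a post hyper-assertion is an upward-closed map $Q$ from hyper-return-values to hyper-assertions (if $Q(\mathbf v)(\mathbf s)$ and $\mathbf v'$ agrees with $\mathbf v$ on $\mathrm{supp}(\mathbf v)$ then $Q(\mathbf v')(\mathbf s)$). Connectives are pointwise. Entailment $P\vdash R$ means $\forall\mathbf s.\ P(\mathbf s)\Rightarrow R(\mathbf s)$. $\mathrm{wp}\,\mathbf t\,\{Q\}(\mathbf s):\iff\forall\mathbf v,\mathbf s'.\ (\mathbf t,\mathbf s\Downarrow\mathbf v,\mathbf s')\Rightarrow Q(\mathbf v)(\mathbf s')$. Projectability. $\mathrm{proj}(\mathbf t)(\mathbf s):\iff\exists\mathbf v,\mathbf s'.\ \mathbf t,\mathbf s\Downarrow\mathbf v,\mathbf s'$. Projection modality. For $I\subseteq\mathrm{Idx}$ and a hyper-assertion $P$: $(\Pi_I.P)(\mathbf s):\iff\exists\mathbf s'.\ P(\mathbf s[i:\mathbf s'(i)\mid i\in I])$, where $\mathbf s[i:\mathbf s'(i)\mid i\in I]$ agrees with $\mathbf s'$ on $I$ and with $\mathbf s$ elsewhere. For a post hyper-assertion $Q$: $\Pi_I.Q:=\lambda\mathbf r.\ \exists\mathbf v.\ \Pi_I.\big(Q(\mathbf r[i:\mathbf v(i)\mid i\in I])\big)$, with $\mathbf v$ ranging over hyper-return-values. *)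

theory Defs
  imports Main
begin

type_synonym val = int
type_synonym pvar = string
type_synonym store = "pvar \<Rightarrow> val"

datatype tm =
    Val val
  | Var pvar
  | Star
  | BinOp "val \<Rightarrow> val \<Rightarrow> val" tm tm
  | Skip
  | Assign pvar tm
  | Seq tm tm
  | If tm tm tm
  | While tm tm

inductive bigstep :: "tm \<Rightarrow> store \<Rightarrow> val \<Rightarrow> store \<Rightarrow> bool" where
  BVal: "bigstep (Val v) s v s"
| BVar: "bigstep (Var x) s (s x) s"
| BStar: "bigstep Star s v s"
| BOp: "bigstep t1 s v1 s1 \<Longrightarrow> bigstep t2 s1 v2 s2 \<Longrightarrow> bigstep (BinOp f t1 t2) s (f v1 v2) s2"
| BSkip: "bigstep Skip s 0 s"
| BAssign: "bigstep t s v s1 \<Longrightarrow> bigstep (Assign x t) s v (s1(x := v))"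
| BSeq: "bigstep t1 s v1 s1 \<Longrightarrow> bigstep t2 s1 v2 s2 \<Longrightarrow> bigstep (Seq t1 t2) s v2 s2"
| BIfT: "bigstep b s vb s1 \<Longrightarrow> vb \<noteq> 0 \<Longrightarrow> bigstep t1 s1 v s2 \<Longrightarrow> bigstep (If b t1 t2) s v s2"
| BIfF: "bigstep b s 0 s1 \<Longrightarrow> bigstep t2 s1 v s2 \<Longrightarrow> bigstep (If b t1 t2) s v s2"
| BWhileF: "bigstep b s 0 s1 \<Longrightarrow> bigstep (While b c) s 0 s1"
| BWhileT: "bigstep b s vb s1 \<Longrightarrow> vb \<noteq> 0 \<Longrightarrow> bigstep c s1 v s2 \<Longrightarrow>
            bigstep (While b c) s2 w s3 \<Longrightarrow> bigstep (While b c) s w s3"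

type_synonym idx = nat
type_synonym hterm = "idx \<rightharpoonup> tm"
type_synonym hstore = "idx \<Rightarrow> store"
type_synonym hval = "idx \<rightharpoonup> val"
type_synonym hassn = "hstore \<Rightarrow> bool"
type_synonym post = "hval \<Rightarrow> hassn"

definition hyper_term :: "hterm \<Rightarrow> bool" where
  "hyper_term t \<longleftrightarrow> finite (dom t)"

definition hyper_val :: "hval \<Rightarrow> bool" where
  "hyper_val v \<longleftrightarrow> finite (dom v)"

definition hbigstep :: "hterm \<Rightarrow> hstore \<Rightarrow> hval \<Rightarrow> hstore \<Rightarrow> bool" where
  "hbigstep t s v s' \<longleftrightarrow>
     (\<forall>i \<in> dom t. \<exists>vi. v i = Some vi \<and> bigstep (the (t i)) (s i) vi (s' i)) \<and>
     (\<forall>i. i \<notin> dom t \<longrightarrow> s' i = s i \<and> v i = None)"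

definition post_hassn :: "post \<Rightarrow> bool" where
  "post_hassn Q \<longleftrightarrow> (\<forall>v v' s. Q v s \<longrightarrow> hyper_val v' \<longrightarrow> v \<subseteq>\<^sub>m v' \<longrightarrow> Q v' s)"

definition entails :: "hassn \<Rightarrow> hassn \<Rightarrow> bool" where
  "entails P R \<longleftrightarrow> (\<forall>s. P s \<longrightarrow> R s)"

definition wp :: "hterm \<Rightarrow> post \<Rightarrow> hassn" where
  "wp t Q s \<longleftrightarrow> (\<forall>v s'. hbigstep t s v s' \<longrightarrow> Q v s')"

definition proj :: "hterm \<Rightarrow> hassn" where
  "proj t s \<longleftrightarrow> (\<exists>v s'. hbigstep t s v s')"

definition hupd :: "(idx \<Rightarrow> 'b) \<Rightarrow> idx set \<Rightarrow> (idx \<Rightarrow> 'b) \<Rightarrow> idx \<Rightarrow> 'b" where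
  "hupd s I s' = (\<lambda>i. if i \<in> I then s' i else s i)"

definition Pi_assn :: "idx set \<Rightarrow> hassn \<Rightarrow> hassn" where
  "Pi_assn I P s \<longleftrightarrow> (\<exists>s'. P (hupd s I s'))"

definition Pi_post :: "idx set \<Rightarrow> post \<Rightarrow> post" where
  "Pi_post I Q r = (\<lambda>s. \<exists>v. hyper_val v \<and> Pi_assn I (Q (hupd r I v)) s)"

definition himp :: "hassn \<Rightarrow> hassn \<Rightarrow> hassn" where
  "himp P R s \<longleftrightarrow> (P s \<longrightarrow> R s)"

definition hconj :: "hassn \<Rightarrow> hassn \<Rightarrow> hassn" where
  "hconj P R s \<longleftrightarrow> (P s \<and> R s)"

end

theory Submission
  imports Defs
begin

text \<open>Let \<open>r\<close> be the witness of the projection and run \<open>t\<^sub>2\<close> from \<open>s\<close>. Since \<open>t\<^sub>2\<close> does not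
touch \<open>I\<close>, overwriting the \<open>I\<close>-part of both stores by \<open>r\<close> still gives a run of \<open>t\<^sub>2\<close>; so by
projectability \<open>t\<^sub>1\<close> has a run from the same store, and gluing the two disjoint runs gives a
run of \<open>t\<^sub>1 ++ t\<^sub>2\<close>. Its return values are exactly those of \<open>t\<^sub>2\<close> updated on \<open>I\<close>, which is
why neither upward closure of \<open>Q\<close> nor finiteness of \<open>dom t\<^sub>2\<close> is needed.\<close>

lemma hupd_hupd [simp]: "hupd (hupd s I r) I r' = hupd s I r'"
  by (simp add: hupd_def fun_eq_iff)

lemma hbigstep_dom: "hbigstep t s v s' \<Longrightarrow> dom v = dom t"
  unfolding hbigstep_def by fastforce

lemma hbigstep_hupd_outside:
  assumes "hbigstep t s v s'" and "dom t \<inter> I = {}"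
  shows "hbigstep t (hupd s I r) v (hupd s' I r)"
  using assms unfolding hbigstep_def hupd_def by (auto simp: disjoint_iff)

lemma hbigstep_map_add:
  assumes run1: "hbigstep t1 s v1 s1" and run2: "hbigstep t2 s v2 s2"
    and disj: "dom t1 \<inter> dom t2 = {}"
  shows "hbigstep (t1 ++ t2) s (v1 ++ v2) (hupd s2 (dom t1) s1)"
  unfolding hbigstep_def
proof (intro conjI allI ballI impI)
  fix i assume "i \<in> dom (t1 ++ t2)"
  then consider "i \<in> dom t2" | "i \<in> dom t1" "t2 i = None" by auto
  then show "\<exists>vi. (v1 ++ v2) i = Some vi \<and>
      bigstep (the ((t1 ++ t2) i)) (s i) vi (hupd s2 (dom t1) s1 i)"
  proof cases
    case 1
    moreover from 1 obtain vi where "v2 i = Some vi" "bigstep (the (t2 i)) (s i) vi (s2 i)"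
      using run2 unfolding hbigstep_def by blast
    moreover have "i \<notin> dom t1"
      using 1 disj by blast
    ultimately show ?thesis
      unfolding hupd_def by (auto simp: map_add_def)
  next
    case 2
    moreover have "v2 i = None"
      using 2 run2 unfolding hbigstep_def by blast
    ultimately show ?thesis
      using run1 unfolding hbigstep_def hupd_def by (auto simp: map_add_def)
  qed
next
  fix i assume "i \<notin> dom (t1 ++ t2)"
  then have "i \<notin> dom t1" "i \<notin> dom t2"
    by auto
  then show "hupd s2 (dom t1) s1 i = s i" "(v1 ++ v2) i = None"
    using run1 run2 unfolding hbigstep_def hupd_def by (simp_all add: map_add_def)
qed

lemma hupd_eq_map_add:
  assumes "dom v1 = I" and "dom v \<inter> I = {}"
  shows "hupd v I v1 = v1 ++ v"
  using assms unfolding hupd_def map_add_def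
  by (fastforce simp: fun_eq_iff split: option.split)

theorem mainTheorem10:
  fixes t1 t2 :: hterm and Q :: post and I :: "idx set"
  assumes "hyper_term t1" and "hyper_term t2"
    and "dom t1 \<inter> dom t2 = {}"
    and "I = dom t1"
    and "post_hassn Q"
  shows "entails
           (Pi_assn I (hconj (himp (proj t2) (proj t1)) (wp (t1 ++ t2) Q)))
           (wp t2 (Pi_post I Q))"
  unfolding entails_def
proof (intro allI impI)
  fix s assume "Pi_assn I (hconj (himp (proj t2) (proj t1)) (wp (t1 ++ t2) Q)) s"
  then obtain r where proj_imp: "proj t2 (hupd s I r) \<Longrightarrow> proj t1 (hupd s I r)"
    and wp12: "wp (t1 ++ t2) Q (hupd s I r)"
    unfolding Pi_assn_def hconj_def himp_def by blast
  show "wp t2 (Pi_post I Q) s"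
    unfolding wp_def
  proof (intro allI impI)
    fix v s2 assume run2: "hbigstep t2 s v s2"
    have run2': "hbigstep t2 (hupd s I r) v (hupd s2 I r)"
      using hbigstep_hupd_outside[OF run2] assms(3,4) by blast
    then obtain v1 s1 where run1: "hbigstep t1 (hupd s I r) v1 s1"
      using proj_imp unfolding proj_def by blast
    have "Q (v1 ++ v) (hupd s2 I s1)"
      using hbigstep_map_add[OF run1 run2' assms(3)] wp12 assms(4) unfolding wp_def by simp
    moreover have "hupd v I v1 = v1 ++ v"
      by (rule hupd_eq_map_add) (use hbigstep_dom[OF run1] hbigstep_dom[OF run2] assms(3,4) in auto)
    moreover have "hyper_val v1"
      using assms(1) hbigstep_dom[OF run1] unfolding hyper_val_def hyper_term_def by simp
    ultimately show "Pi_post I Q v s2"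
      unfolding Pi_post_def Pi_assn_def by (intro exI[of _ v1] conjI exI[of _ s1]) simp_all
  qed
qed

end
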